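(* Consider a network of $n$ parallel roads (indexed by $i\in[n]$) shared by $m$ vehicle types (indexed by $j\in[m]$), where vehicle type $j$ has total demand $\bar f^j\ge 0$. A routing is a vector $f=(f^j_i)_{i\in[n],j\in[m]}$; it is feasible if $f^j_i\ge 0$ for all $i,j$ and $\sum_{i\in[n]} f^j_i=\bar f^j$ for all $j$. The latency of road $i$ is $\ell_i(f)=b_i+\sum_{j\in[m]} a^j_i f^j_i$ with constants $a^j_i\ge 0$, $b_i\ge 0$, and the social cost is $J(f)=\sum_{i\in[n]}\big(\sum_{j\in[m]} f^j_i\big)\ell_i(f)$. Let $\mathcal F^*$ be the set of feasible routings minimizing $J$. For a routing $f$, let $G(f)$ be the bipartite graph whose node set consists of the $n$ roads and the $m$ vehicle types, with an edge between road $i$ and vehicle type $j$ if and only if $f^j_i>0$. Then there exists $f\in\mathcal F^*$ such that $G(f)$ is acyclic.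
   Context: Parallel-road network with multiple vehicle types: flow $f^j_i$ of type $j$ on road $i$; each road's latency is affine in the flows of all vehicle types, with type-dependent coefficients $a^j_i$. The social cost is the total latency experienced by all flow. *)

theory Defs
  imports Main "HOL.Real"
begin

text \<open>Roads are indexed by i < n, vehicle types by j < m.
  A routing is f :: nat => nat => real, with f i j the flow of type j on road i.\<close>

definition feasible :: "nat \<Rightarrow> nat \<Rightarrow> (nat \<Rightarrow> real) \<Rightarrow> (nat \<Rightarrow> nat \<Rightarrow> real) \<Rightarrow> bool" where
  "feasible n m fbar f \<longleftrightarrow>
     (\<forall>i<n. \<forall>j<m. f i j \<ge> 0) \<and> (\<forall>j<m. (\<Sum>i<n. f i j) = fbar j)"

definition latency :: "nat \<Rightarrow> (nat \<Rightarrow> nat \<Rightarrow> real) \<Rightarrow> (nat \<Rightarrow> real) \<Rightarrow> (nat \<Rightarrow> nat \<Rightarrow> real) \<Rightarrow> nat \<Rightarrow> real" where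
  "latency m a b f i = b i + (\<Sum>j<m. a i j * f i j)"

definition social_cost :: "nat \<Rightarrow> nat \<Rightarrow> (nat \<Rightarrow> nat \<Rightarrow> real) \<Rightarrow> (nat \<Rightarrow> real) \<Rightarrow> (nat \<Rightarrow> nat \<Rightarrow> real) \<Rightarrow> real" where
  "social_cost n m a b f = (\<Sum>i<n. (\<Sum>j<m. f i j) * latency m a b f i)"

definition G_adj :: "nat \<Rightarrow> nat \<Rightarrow> (nat \<Rightarrow> nat \<Rightarrow> real) \<Rightarrow> nat + nat \<Rightarrow> nat + nat \<Rightarrow> bool" where
  "G_adj n m f u v = (case (u, v) of
      (Inl i, Inr j) \<Rightarrow> i < n \<and> j < m \<and> f i j > 0
    | (Inr j, Inl i) \<Rightarrow> i < n \<and> j < m \<and> f i j > 0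
    | _ \<Rightarrow> False)"

definition G_acyclic :: "nat \<Rightarrow> nat \<Rightarrow> (nat \<Rightarrow> nat \<Rightarrow> real) \<Rightarrow> bool" where
  "G_acyclic n m f \<longleftrightarrow>
     \<not> (\<exists>cs. length cs \<ge> 3 \<and> distinct cs \<and>
            (\<forall>k<length cs. G_adj n m f (cs ! k) (cs ! ((k + 1) mod length cs))))"

end

theory Submission
  imports Defs "HOL-Analysis.Analysis"
begin

text \<open>Optimal routings exist by compactness; choose one, f, with the fewest positive entries.
  A cycle of G(f) alternates between roads and vehicle types, so it has even length, and weights
  +1 and -1 placed alternately on its edges form a circulation d: all road sums and all type sums
  vanish, and d lives on the positive entries of f. Along d the total flow on each road is
  constant, so the cost is affine in the step. Since f can be moved a little in both directions
  +d and -d, optimality forces zero slope, and moving along d until an entry of f reaches zero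
  yields an optimal routing with fewer positive entries, a contradiction.\<close>

type_synonym routing = "nat \<Rightarrow> nat \<Rightarrow> real"

definition optimal ::
    "nat \<Rightarrow> nat \<Rightarrow> routing \<Rightarrow> (nat \<Rightarrow> real) \<Rightarrow> (nat \<Rightarrow> real) \<Rightarrow> routing \<Rightarrow> bool" where
  "optimal n m a b fbar f \<longleftrightarrow> feasible n m fbar f \<and>
     (\<forall>g. feasible n m fbar g \<longrightarrow> social_cost n m a b f \<le> social_cost n m a b g)"

definition support :: "nat \<Rightarrow> nat \<Rightarrow> routing \<Rightarrow> (nat \<times> nat) set" where
  "support n m f = {(i, j). i < n \<and> j < m \<and> f i j \<noteq> 0}"

definition zero_margins :: "nat \<Rightarrow> nat \<Rightarrow> routing \<Rightarrow> bool" where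
  "zero_margins n m d \<longleftrightarrow> (\<forall>j<m. (\<Sum>i<n. d i j) = 0) \<and> (\<forall>i<n. (\<Sum>j<m. d i j) = 0)"

lemma finite_support: "finite (support n m f)"
  by (rule finite_subset[of _ "{..<n} \<times> {..<m}"]) (auto simp: support_def)

lemma continuous_on_app2: "continuous_on UNIV (\<lambda>f::'a \<Rightarrow> 'b \<Rightarrow> 'c::topological_space. f i j)"
  using continuous_on_product_then_coordinatewise[OF continuous_on_product_coordinates[of i], of j] .

lemma compact_PiE_PiE:
  fixes S :: "'a \<Rightarrow> 'b \<Rightarrow> 'c::topological_space set"
  assumes "\<And>i j. compact (S i j)"
  shows "compact (PiE UNIV (\<lambda>i. PiE UNIV (S i)))"
proof -
  have "compact (PiE UNIV (S i))" for i
    using assms compactin_PiE[of "\<lambda>_. euclidean" UNIV "S i"]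
    by (simp add: euclidean_product_topology)
  then show ?thesis
    using compactin_PiE[of "\<lambda>_. euclidean" UNIV "\<lambda>i. PiE UNIV (S i)"]
    by (simp add: euclidean_product_topology)
qed

lemma continuous_on_social_cost: "continuous_on UNIV (social_cost n m a b)"
  unfolding social_cost_def latency_def by (intro continuous_intros continuous_on_app2)

lemma closed_feasible: "closed {f. feasible n m fbar f}"
  unfolding feasible_def
  by (intro closed_Collect_conj closed_Collect_all closed_Collect_imp open_Collect_const
      closed_Collect_le closed_Collect_eq continuous_intros continuous_on_app2)

lemma feasible_le_demand:
  assumes "feasible n m fbar f" "i < n" "j < m"
  shows "f i j \<le> fbar j"
proof -
  have "f i j \<le> (\<Sum>i<n. f i j)"
    by (rule member_le_sum) (use assms in \<open>auto simp: feasible_def\<close>)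
  then show ?thesis using assms by (simp add: feasible_def)
qed

lemma feasible_cong:
  "(\<And>i j. i < n \<Longrightarrow> j < m \<Longrightarrow> f i j = g i j) \<Longrightarrow>
    feasible n m fbar f = feasible n m fbar g"
  unfolding feasible_def by simp

lemma social_cost_cong:
  "(\<And>i j. i < n \<Longrightarrow> j < m \<Longrightarrow> f i j = g i j) \<Longrightarrow>
    social_cost n m a b f = social_cost n m a b g"
  unfolding social_cost_def latency_def by simp

lemma feasible_exists:
  assumes "n \<ge> 1" "\<forall>j<m. fbar j \<ge> 0"
  shows "\<exists>f. feasible n m fbar f"
proof
  show "feasible n m fbar (\<lambda>i j. if i = 0 then fbar j else 0)"
    using assms by (auto simp: feasible_def)
qed

lemma optimal_exists:
  assumes "n \<ge> 1" "\<forall>j<m. fbar j \<ge> 0"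
  shows "\<exists>f. optimal n m a b fbar f"
proof -
  define restrict where
    "restrict f = (\<lambda>i j. if i < n \<and> j < m then f i j else 0)" for f :: routing
  define box where
    "box = PiE UNIV (\<lambda>i. PiE UNIV (\<lambda>j. if i < n \<and> j < m then {0..fbar j} else {0}))"
  let ?K = "box \<inter> {f. feasible n m fbar f}"
  have restrict: "restrict f \<in> ?K"
    and cost_restrict: "social_cost n m a b (restrict f) = social_cost n m a b f"
    if "feasible n m fbar f" for f
    using that feasible_le_demand[OF that] feasible_cong[of n m "restrict f" f]
      social_cost_cong[of n m "restrict f" f]
    by (auto simp: box_def restrict_def feasible_def)
  have "compact ?K"
    unfolding box_def by (intro compact_Int_closed compact_PiE_PiE closed_feasible) auto
  moreover have "?K \<noteq> {}"
    using feasible_exists[OF assms] restrict by blast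
  ultimately obtain f where f: "f \<in> ?K"
    and min: "\<forall>g\<in>?K. social_cost n m a b f \<le> social_cost n m a b g"
    using continuous_attains_inf continuous_on_subset[OF continuous_on_social_cost subset_UNIV]
    by metis
  have "social_cost n m a b f \<le> social_cost n m a b g" if "feasible n m fbar g" for g
    using min restrict[OF that] cost_restrict[OF that] by metis
  with f show ?thesis
    unfolding optimal_def by blast
qed

lemma support_add_scaled: "support n m (\<lambda>i j. f i j + t * d i j) \<subseteq> support n m f \<union> support n m d"
  by (auto simp: support_def)

lemma feasible_add_scaled:
  assumes "feasible n m fbar f" "\<forall>j<m. (\<Sum>i<n. d i j) = 0"
    and "\<forall>i<n. \<forall>j<m. 0 \<le> f i j + t * d i j"
  shows "feasible n m fbar (\<lambda>i j. f i j + t * d i j)"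
  using assms by (simp add: feasible_def sum.distrib sum_distrib_left[symmetric])

text \<open>Ratio test: move along d until the first entry of f hits zero.\<close>

lemma feasible_step_shrinks_support:
  assumes f: "feasible n m fbar f" and d: "\<forall>j<m. (\<Sum>i<n. d i j) = 0"
    and supp: "support n m d \<subseteq> support n m f" and neg: "\<exists>i<n. \<exists>j<m. d i j < 0"
  shows "\<exists>t>0. feasible n m fbar (\<lambda>i j. f i j + t * d i j)
           \<and> support n m (\<lambda>i j. f i j + t * d i j) \<subset> support n m f"
proof -
  let ?N = "{(i, j). i < n \<and> j < m \<and> d i j < 0}"
  let ?ratio = "\<lambda>(i, j). f i j / - d i j"
  define t where "t = Min (?ratio ` ?N)"
  have fin: "finite ?N"
    by (rule finite_subset[of _ "{..<n} \<times> {..<m}"]) auto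
  then have t_le: "t \<le> f i j / - d i j" if "(i, j) \<in> ?N" for i j
    using that unfolding t_def by (metis (mono_tags) Min_le case_prod_conv finite_imageI image_eqI)
  have "?N \<noteq> {}"
    using neg by auto
  then have "t \<in> ?ratio ` ?N"
    unfolding t_def using fin by (intro Min_in) auto
  then obtain p where "p \<in> ?N" "t = ?ratio p"
    by blast
  then obtain i1 j1 where ij1: "(i1, j1) \<in> ?N" "t = f i1 j1 / - d i1 j1"
    by (cases p) simp
  have f_nonneg: "\<forall>i<n. \<forall>j<m. 0 \<le> f i j"
    using f by (simp add: feasible_def)
  have f_pos: "0 < f i j" if "(i, j) \<in> ?N" for i j
    using that supp f_nonneg by (force simp: support_def)
  have "t > 0"
    using ij1 f_pos by (simp add: divide_pos_neg)
  have "0 \<le> f i j + t * d i j" if "i < n" "j < m" for i j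
  proof (cases "d i j < 0")
    case True
    with that t_le have "t \<le> f i j / - d i j"
      by simp
    with True have "t * - d i j \<le> f i j"
      by (subst (asm) pos_le_divide_eq) auto
    then show ?thesis by simp
  next
    case False
    with that f_nonneg \<open>t > 0\<close> show ?thesis by simp
  qed
  then have "feasible n m fbar (\<lambda>i j. f i j + t * d i j)"
    using feasible_add_scaled[OF f d] by blast
  moreover have "(i1, j1) \<in> support n m f - support n m (\<lambda>i j. f i j + t * d i j)"
  proof -
    have "f i1 j1 + t * d i1 j1 = 0" and "0 < f i1 j1"
      using ij1 f_pos by auto
    with ij1 show ?thesis
      by (auto simp: support_def)
  qed
  then have "support n m (\<lambda>i j. f i j + t * d i j) \<subset> support n m f"
    using support_add_scaled[of n m f t d] supp by blast
  ultimately show ?thesis using \<open>t > 0\<close> by blast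
qed

text \<open>Moving along a direction with zero road sums keeps every road's total flow fixed,
  so the cost changes only through the latencies and is affine in the step.\<close>

lemma social_cost_add_scaled:
  assumes "\<forall>i<n. (\<Sum>j<m. d i j) = 0"
  shows "social_cost n m a b (\<lambda>i j. f i j + t * d i j) =
         social_cost n m a b f + t * (\<Sum>i<n. (\<Sum>j<m. f i j) * (\<Sum>j<m. a i j * d i j))"
proof -
  have "(\<Sum>j<m. f i j + t * d i j) * latency m a b (\<lambda>i j. f i j + t * d i j) i =
        (\<Sum>j<m. f i j) * latency m a b f i + t * ((\<Sum>j<m. f i j) * (\<Sum>j<m. a i j * d i j))"
    if "i < n" for i
  proof -
    have "(\<Sum>j<m. f i j + t * d i j) = (\<Sum>j<m. f i j)"
      using assms that by (simp add: sum.distrib sum_distrib_left[symmetric])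
    moreover have "latency m a b (\<lambda>i j. f i j + t * d i j) i =
        latency m a b f i + t * (\<Sum>j<m. a i j * d i j)"
      by (simp add: latency_def sum.distrib sum_distrib_left algebra_simps)
    ultimately show ?thesis
      by (simp add: algebra_simps)
  qed
  then have "social_cost n m a b (\<lambda>i j. f i j + t * d i j) =
      (\<Sum>i<n. (\<Sum>j<m. f i j) * latency m a b f i + t * ((\<Sum>j<m. f i j) * (\<Sum>j<m. a i j * d i j)))"
    unfolding social_cost_def by (intro sum.cong) auto
  then show ?thesis
    unfolding social_cost_def by (simp add: sum.distrib sum_distrib_left)
qed

lemma sum_zero_has_negative:
  fixes d :: "'a \<Rightarrow> 'b::{ordered_comm_monoid_add, linorder}"
  assumes "finite A" "sum d A = 0" "x \<in> A" "d x \<noteq> 0"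
  shows "\<exists>y\<in>A. d y < 0"
proof (rule ccontr)
  assume "\<not> ?thesis"
  then have "\<forall>y\<in>A. 0 \<le> d y"
    by (auto simp: not_less)
  with assms sum_nonneg_eq_0_iff show False
    by blast
qed

text \<open>Both directions d and -d are feasible for a short step, so the affine cost has zero slope
  along d, and the optimum may be followed until an entry of its support vanishes.\<close>

lemma optimal_shrink_support:
  assumes opt: "optimal n m a b fbar f" and d: "zero_margins n m d"
    and supp: "support n m d \<subseteq> support n m f" and nonzero: "support n m d \<noteq> {}"
  shows "\<exists>g. optimal n m a b fbar g \<and> support n m g \<subset> support n m f"
proof -
  have f: "feasible n m fbar f"
    and min: "\<And>g. feasible n m fbar g \<Longrightarrow> social_cost n m a b f \<le> social_cost n m a b g"
    using opt by (auto simp: optimal_def)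
  have cols: "\<forall>j<m. (\<Sum>i<n. d i j) = 0" and rows: "\<forall>i<n. (\<Sum>j<m. d i j) = 0"
    using d by (auto simp: zero_margins_def)
  have cols': "\<forall>j<m. (\<Sum>i<n. - d i j) = 0" and rows': "\<forall>i<n. (\<Sum>j<m. - d i j) = 0"
    using cols rows by (simp_all add: sum_negf)
  obtain i0 j0 where ij0: "i0 < n" "j0 < m" "d i0 j0 \<noteq> 0"
    using nonzero by (auto simp: support_def)
  have "\<exists>i<n. \<exists>j<m. d i j < 0" and "\<exists>i<n. \<exists>j<m. - d i j < 0"
    using sum_zero_has_negative[of "{..<n}" "\<lambda>i. d i j0" i0]
      sum_zero_has_negative[of "{..<n}" "\<lambda>i. - d i j0" i0] cols cols' ij0 by auto
  moreover have "support n m (\<lambda>i j. - d i j) \<subseteq> support n m f"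
    using supp by (simp add: support_def)
  ultimately obtain t s where
      t: "t > 0" "feasible n m fbar (\<lambda>i j. f i j + t * d i j)"
        "support n m (\<lambda>i j. f i j + t * d i j) \<subset> support n m f" and
      s: "s > 0" "feasible n m fbar (\<lambda>i j. f i j + s * - d i j)"
    using feasible_step_shrinks_support[OF f cols supp] feasible_step_shrinks_support[OF f cols']
    by blast
  define slope where "slope = (\<Sum>i<n. (\<Sum>j<m. f i j) * (\<Sum>j<m. a i j * d i j))"
  have cost_t: "social_cost n m a b (\<lambda>i j. f i j + t * d i j) = social_cost n m a b f + t * slope"
    using social_cost_add_scaled[OF rows] by (simp add: slope_def)
  have cost_s: "social_cost n m a b (\<lambda>i j. f i j + s * - d i j) = social_cost n m a b f - s * slope"
    using social_cost_add_scaled[OF rows', where f = f and t = s] by (simp add: slope_def sum_negf)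
  have "0 \<le> t * slope" and "s * slope \<le> 0"
    using min[OF t(2)] min[OF s(2)] cost_t cost_s by simp_all
  then have "slope = 0"
    using t(1) s(1) by (simp add: zero_le_mult_iff mult_le_0_iff)
  then have "optimal n m a b fbar (\<lambda>i j. f i j + t * d i j)"
    using t(2) cost_t min by (simp add: optimal_def)
  then show ?thesis using t(3) by blast
qed

definition G_cycle :: "nat \<Rightarrow> nat \<Rightarrow> routing \<Rightarrow> (nat + nat) list \<Rightarrow> bool" where
  "G_cycle n m f cs \<longleftrightarrow> length cs \<ge> 3 \<and> distinct cs \<and>
     (\<forall>k<length cs. G_adj n m f (cs ! k) (cs ! ((k + 1) mod length cs)))"

lemma G_acyclic_iff: "G_acyclic n m f \<longleftrightarrow> (\<nexists>cs. G_cycle n m f cs)"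
  unfolding G_acyclic_def G_cycle_def ..

lemma G_adj_cases:
  assumes "G_adj n m f u v"
  obtains i j where "i < n" "j < m" "f i j > 0" "{u, v} = {Inl i, Inr j}"
  using assms unfolding G_adj_def by (cases u; cases v) auto

lemma cyclic_alternation_even:
  fixes L :: nat and p :: "nat \<Rightarrow> bool"
  assumes "\<forall>k<L. p k \<noteq> p ((k + 1) mod L)"
  shows "even L"
proof (cases L)
  case 0
  then show ?thesis by simp
next
  case (Suc L')
  have alt: "p k = (p 0 = even k)" if "k < L" for k
    using that
  proof (induction k)
    case (Suc k)
    then show ?case using assms[rule_format, of k] by auto
  qed simp
  have "p L' \<noteq> p 0"
    using assms[rule_format, of L'] Suc by simp
  then have "odd L'"
    using alt[of L'] Suc by auto
  then show ?thesis using Suc by simp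
qed

lemma G_cycle_even_length:
  assumes "G_cycle n m f cs"
  shows "even (length cs)"
proof (rule cyclic_alternation_even[where p = "\<lambda>k. isl (cs ! k)"], intro allI impI)
  fix k assume "k < length cs"
  with assms have "G_adj n m f (cs ! k) (cs ! ((k + 1) mod length cs))"
    by (simp add: G_cycle_def)
  then show "isl (cs ! k) \<noteq> isl (cs ! ((k + 1) mod length cs))"
    by (elim G_adj_cases) (auto simp: doubleton_eq_iff)
qed

lemma alternating_sum_cyclic_pairs:
  fixes h :: "nat \<Rightarrow> 'a::comm_ring_1"
  assumes "even L"
  shows "(\<Sum>k<L. (-1) ^ k * (h k + h ((k + 1) mod L))) = 0"
proof (cases L)
  case 0
  then show ?thesis by simp
next
  case (Suc L')
  then have "odd L'" using assms by simp
  have "(\<Sum>k<L. (-1) ^ k * h ((k + 1) mod L)) =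
      (\<Sum>k<L'. (-1) ^ k * h (Suc k)) + (-1) ^ L' * h 0"
    using Suc by (simp add: sum.lessThan_Suc)
  moreover have "(\<Sum>k<L. (-1) ^ k * h k) = h 0 + (\<Sum>k<L'. (-1) ^ Suc k * h (Suc k))"
    using Suc sum.lessThan_Suc_shift[of "\<lambda>k. (-1) ^ k * h k" L'] by simp
  ultimately show ?thesis
    using \<open>odd L'\<close> by (simp add: distrib_left sum.distrib sum_negf)
qed

definition edge_indicator :: "nat + nat \<Rightarrow> nat + nat \<Rightarrow> nat \<Rightarrow> nat \<Rightarrow> real" where
  "edge_indicator u v i j = of_bool ({u, v} = {Inl i, Inr j})"

lemma
  assumes "G_adj n m f u v"
  shows sum_edge_indicator_roads:
      "(\<Sum>i<n. edge_indicator u v i j) = of_bool (u = Inr j) + of_bool (v = Inr j)"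
    and sum_edge_indicator_types:
      "(\<Sum>j<m. edge_indicator u v i j) = of_bool (u = Inl i) + of_bool (v = Inl i)"
proof -
  obtain i' j' where "i' < n" "j' < m" and uv: "{u, v} = {Inl i', Inr j'}"
    using assms by (elim G_adj_cases)
  have "of_bool (u = Inr j) + of_bool (v = Inr j) = (of_bool (j = j') :: real)"
    and "of_bool (u = Inl i) + of_bool (v = Inl i) = (of_bool (i = i') :: real)"
    using uv by (auto simp: doubleton_eq_iff)
  moreover have "edge_indicator u v x j = (if x = i' then of_bool (j = j') else 0)"
    and "edge_indicator u v i y = (if y = j' then of_bool (i = i') else 0)" for x y
    using uv by (auto simp: edge_indicator_def doubleton_eq_iff)
  ultimately show "(\<Sum>i<n. edge_indicator u v i j) = of_bool (u = Inr j) + of_bool (v = Inr j)"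
    and "(\<Sum>j<m. edge_indicator u v i j) = of_bool (u = Inl i) + of_bool (v = Inl i)"
    using \<open>i' < n\<close> \<open>j' < m\<close> by simp_all
qed

text \<open>The alternating weights balance at every vertex because bipartite cycles have even length.\<close>

definition cycle_direction :: "(nat + nat) list \<Rightarrow> nat \<Rightarrow> nat \<Rightarrow> real" where
  "cycle_direction cs i j =
     (\<Sum>k<length cs. (-1) ^ k * edge_indicator (cs ! k) (cs ! ((k + 1) mod length cs)) i j)"

lemma zero_margins_cycle_direction:
  assumes cyc: "G_cycle n m f cs"
  shows "zero_margins n m (cycle_direction cs)"
proof -
  let ?L = "length cs" and ?nx = "\<lambda>k. (k + 1) mod length cs"
  have adj: "G_adj n m f (cs ! k) (cs ! ?nx k)" if "k < ?L" for k
    using cyc that by (simp add: G_cycle_def)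
  have balanced:
    "(\<Sum>k<?L. (-1) ^ k * (of_bool (cs ! k = w) + of_bool (cs ! ?nx k = w))) = (0::real)" for w
    using alternating_sum_cyclic_pairs[OF G_cycle_even_length[OF cyc]] .
  have "(\<Sum>i<n. cycle_direction cs i j) = 0" for j
  proof -
    have "(\<Sum>i<n. cycle_direction cs i j) =
        (\<Sum>k<?L. (-1) ^ k * (\<Sum>i<n. edge_indicator (cs ! k) (cs ! ?nx k) i j))"
      unfolding cycle_direction_def by (simp add: sum.swap[of _ "{..<n}"] sum_distrib_left)
    also have "\<dots> = (\<Sum>k<?L. (-1) ^ k * (of_bool (cs ! k = Inr j) + of_bool (cs ! ?nx k = Inr j)))"
      by (intro sum.cong refl) (simp only: lessThan_iff sum_edge_indicator_roads[OF adj])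
    finally show ?thesis
      using balanced by simp
  qed
  moreover have "(\<Sum>j<m. cycle_direction cs i j) = 0" for i
  proof -
    have "(\<Sum>j<m. cycle_direction cs i j) =
        (\<Sum>k<?L. (-1) ^ k * (\<Sum>j<m. edge_indicator (cs ! k) (cs ! ?nx k) i j))"
      unfolding cycle_direction_def by (simp add: sum.swap[of _ "{..<m}"] sum_distrib_left)
    also have "\<dots> = (\<Sum>k<?L. (-1) ^ k * (of_bool (cs ! k = Inl i) + of_bool (cs ! ?nx k = Inl i)))"
      by (intro sum.cong refl) (simp only: lessThan_iff sum_edge_indicator_types[OF adj])
    finally show ?thesis
      using balanced by simp
  qed
  ultimately show ?thesis
    unfolding zero_margins_def by simp
qed

lemma support_cycle_direction:
  assumes cyc: "G_cycle n m f cs"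
  shows "support n m (cycle_direction cs) \<subseteq> support n m f"
proof
  fix p assume "p \<in> support n m (cycle_direction cs)"
  then obtain i j where p: "p = (i, j)" "i < n" "j < m" and "cycle_direction cs i j \<noteq> 0"
    by (auto simp: support_def)
  then obtain k where k: "k < length cs"
    and "edge_indicator (cs ! k) (cs ! ((k + 1) mod length cs)) i j \<noteq> 0"
    unfolding cycle_direction_def by (auto elim: sum.not_neutral_contains_not_neutral)
  then have edge: "{cs ! k, cs ! ((k + 1) mod length cs)} = {Inl i, Inr j}"
    by (simp add: edge_indicator_def)
  from cyc k have "G_adj n m f (cs ! k) (cs ! ((k + 1) mod length cs))"
    by (simp add: G_cycle_def)
  then obtain i' j' where "f i' j' > 0" "{Inl i, Inr j} = {Inl i', Inr j'}"
    by (elim G_adj_cases) (metis edge)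
  then have "f i j > 0"
    by (simp add: doubleton_eq_iff)
  with p show "p \<in> support n m f"
    by (simp add: support_def)
qed

text \<open>Distinctness of the vertices makes the first edge occur only once, with weight 1.\<close>

lemma cycle_direction_nonzero:
  assumes cyc: "G_cycle n m f cs"
  shows "support n m (cycle_direction cs) \<noteq> {}"
proof -
  let ?L = "length cs" and ?nx = "\<lambda>k. (k + 1) mod length cs"
  have L: "?L \<ge> 3" and dist: "distinct cs"
    using cyc by (auto simp: G_cycle_def)
  then have L0: "0 < ?L" and L1: "1 < ?L" and nx1: "?nx 0 = 1"
    by auto
  have "G_adj n m f (cs ! 0) (cs ! ?nx 0)"
    using cyc L0 by (simp only: G_cycle_def)
  then obtain i j where ij: "i < n" "j < m" and first: "{cs ! 0, cs ! 1} = {Inl i, Inr j}"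
    unfolding nx1 by (elim G_adj_cases)
  have other: "{cs ! k, cs ! ?nx k} \<noteq> {cs ! 0, cs ! 1}" if "0 < k" "k < ?L" for k
  proof
    assume "{cs ! k, cs ! ?nx k} = {cs ! 0, cs ! 1}"
    moreover have "cs ! k \<noteq> cs ! 0"
      using that nth_eq_iff_index_eq[OF dist \<open>k < ?L\<close> L0] by simp
    ultimately have "cs ! k = cs ! 1" "cs ! ?nx k = cs ! 0"
      by (auto simp: doubleton_eq_iff)
    moreover have "?nx k < ?L"
      using L0 by simp
    ultimately have "k = 1" "?nx k = 0"
      using nth_eq_iff_index_eq[OF dist \<open>k < ?L\<close> L1] nth_eq_iff_index_eq[OF dist _ L0] by auto
    then show False
      using L by simp
  qed
  have "edge_indicator (cs ! k) (cs ! ?nx k) i j = of_bool (k = 0)" if "k < ?L" for k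
    using that other[of k] first nx1 by (cases "k = 0") (auto simp: edge_indicator_def)
  then have "cycle_direction cs i j = (\<Sum>k<?L. (-1) ^ k * of_bool (k = 0))"
    unfolding cycle_direction_def by (intro sum.cong) auto
  also have "\<dots> = 1"
    using L0 by (simp add: of_bool_def if_distrib sum.delta cong: if_cong)
  finally have "(i, j) \<in> support n m (cycle_direction cs)"
    using ij by (simp add: support_def)
  then show ?thesis
    by blast
qed

theorem theorem1:
  fixes n m :: nat
    and fbar :: "nat \<Rightarrow> real"
    and a :: "nat \<Rightarrow> nat \<Rightarrow> real"
    and b :: "nat \<Rightarrow> real"
  assumes "n \<ge> 1"
    and "\<forall>j<m. fbar j \<ge> 0"
    and "\<forall>i<n. \<forall>j<m. a i j \<ge> 0"
    and "\<forall>i<n. b i \<ge> 0"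
  shows "\<exists>f. feasible n m fbar f
             \<and> (\<forall>g. feasible n m fbar g \<longrightarrow> social_cost n m a b f \<le> social_cost n m a b g)
             \<and> G_acyclic n m f"
proof -
  obtain f0 where "optimal n m a b fbar f0"
    using optimal_exists[OF assms(1,2)] by blast
  then obtain f where opt: "optimal n m a b fbar f"
    and fewest: "\<And>g. optimal n m a b fbar g \<Longrightarrow> card (support n m f) \<le> card (support n m g)"
    using ex_has_least_nat[of "optimal n m a b fbar" f0 "\<lambda>f. card (support n m f)"] by blast
  have "G_acyclic n m f"
  proof (rule ccontr)
    assume "\<not> G_acyclic n m f"
    then obtain cs where cyc: "G_cycle n m f cs"
      by (auto simp: G_acyclic_iff)
    then obtain g where "optimal n m a b fbar g" "support n m g \<subset> support n m f"
      using optimal_shrink_support[OF opt zero_margins_cycle_direction[OF cyc]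
          support_cycle_direction[OF cyc] cycle_direction_nonzero[OF cyc]]
      by blast
    then show False
      using fewest psubset_card_mono[OF finite_support] by (meson not_le)
  qed
  with opt show ?thesis
    by (auto simp: optimal_def)
qed

end
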